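(* Define the following equivalence relation on $SU(2)$: $g_1\approx g_2$ if there exist $(a_1,b_1,c_1),(a_2,b_2,c_2)$ such that $g_1=e^{-b_1p_2}e^{a_1p_1}e^{c_1p_2}$, $g_2=e^{-b_2p_2}e^{a_2p_1}e^{c_2p_2}$ and $a_1=a_2$, $b_1=b_2$, $c_1=c_2 \mod \pi$. Then the 3-D manifold $SU(2)/\approx$ is the lens space $L(4,1)$.
   Context: $SU(2)=\{\begin{pmatrix}\alpha&\beta\\-\bar\beta&\bar\alpha\end{pmatrix}\in \mathrm{Mat}(2,\mathbb{C}) : |\alpha|^2+|\beta|^2=1\}$, with Lie algebra basis $p_1=\frac12\begin{pmatrix}0&1\\-1&0\end{pmatrix}$, $p_2=\frac12\begin{pmatrix}0&i\\i&0\end{pmatrix}$, $k=\frac12\begin{pmatrix}i&0\\0&-i\end{pmatrix}$. Every $g\in SU(2)$ can be written as $g=e^{-bp_2}e^{ap_1}e^{cp_2}$ with $a\in[0,\pi]$, $b\in[0,2\pi)$, $c\in\mathbb{R}/(4\pi)$; $a$ is uniquely determined by $g$, and $b,c$ are uniquely determined when $a\neq 0,\pi$ (for $a=0$ only $c-b \mod 4\pi$ is determined, for $a=\pi$ only $c+b\mod 4\pi$). The lens space $L(p,q)$ ($p,q$ coprime nonzero integers) is $S^3/\sim$, where $S^3=\{(x_1,x_2)\in\mathbb{C}^2 : |x_1|^2+|x_2|^2=1\}$ and $(x_1,x_2)\sim(y_1,y_2)$ iff there is $\omega\in\mathbb{C}$ with $\omega^p=1$ and $x_1=\omega y_1$,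 $x_2=\omega^q y_2$. *)

theory Defs
  imports "HOL-Analysis.Analysis"
begin

type_synonym cmat2 = "complex^2^2"

definition mat2 :: "complex \<Rightarrow> complex \<Rightarrow> complex \<Rightarrow> complex \<Rightarrow> cmat2" where
  "mat2 a b c d = vector [vector [a, b], vector [c, d]]"

fun mpow :: "cmat2 \<Rightarrow> nat \<Rightarrow> cmat2" where
  "mpow A 0 = mat 1"
| "mpow A (Suc n) = A ** mpow A n"

definition mexp :: "cmat2 \<Rightarrow> cmat2" where
  "mexp A = (\<Sum>n. (1 / fact n) *\<^sub>R mpow A n)"

definition SU2 :: "cmat2 set" where
  "SU2 = {mat2 \<alpha> \<beta> (- cnj \<beta>) (cnj \<alpha>) | \<alpha> \<beta>. (cmod \<alpha>)\<^sup>2 + (cmod \<beta>)\<^sup>2 = 1}"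

definition p1 :: cmat2 where "p1 = mat2 0 (1/2) (-1/2) 0"
definition p2 :: cmat2 where "p2 = mat2 0 (\<i>/2) (\<i>/2) 0"
definition kk :: cmat2 where "kk = mat2 (\<i>/2) 0 0 (-\<i>/2)"

definition euler :: "real \<Rightarrow> real \<Rightarrow> real \<Rightarrow> cmat2" where
  "euler a b c = mexp ((- b) *\<^sub>R p2) ** mexp (a *\<^sub>R p1) ** mexp (c *\<^sub>R p2)"

text \<open>Parameter ranges: a in [0,pi], b in [0,2pi), c real (taken mod 4pi, which is harmless).\<close>
definition approx_rel :: "cmat2 \<Rightarrow> cmat2 \<Rightarrow> bool" where
  "approx_rel g1 g2 \<longleftrightarrow> (\<exists>a1 b1 c1 a2 b2 c2.
      a1 \<in> {0..pi} \<and> b1 \<in> {0..<2*pi} \<and> a2 \<in> {0..pi} \<and> b2 \<in> {0..<2*pi} \<and>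
      g1 = euler a1 b1 c1 \<and> g2 = euler a2 b2 c2 \<and>
      a1 = a2 \<and> b1 = b2 \<and> (\<exists>k::int. c1 - c2 = of_int k * pi))"

definition S3 :: "(complex \<times> complex) set" where
  "S3 = {(x1, x2). (cmod x1)\<^sup>2 + (cmod x2)\<^sup>2 = 1}"

definition lens_rel :: "int \<Rightarrow> int \<Rightarrow> complex \<times> complex \<Rightarrow> complex \<times> complex \<Rightarrow> bool" where
  "lens_rel p q x y \<longleftrightarrow> (\<exists>\<omega>::complex. \<omega> powi p = 1 \<and>
      fst x = \<omega> * fst y \<and> snd x = \<omega> powi q * snd y)"

definition quot_top :: "'a topology \<Rightarrow> ('a \<Rightarrow> 'a \<Rightarrow> bool) \<Rightarrow> 'a set topology" where
  "quot_top X R = topology (\<lambda>U. U \<subseteq> (\<lambda>x. {y \<in> topspace X. R x y}) ` topspace X \<and>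
      openin X {x \<in> topspace X. {y \<in> topspace X. R x y} \<in> U})"

definition lens_space :: "int \<Rightarrow> int \<Rightarrow> (complex \<times> complex) set topology" where
  "lens_space p q = quot_top (subtopology euclidean S3) (lens_rel p q)"

end

theory Submission
  imports Defs
begin

text \<open>
  Right multiplication by \<open>e\<^bsup>t p\<^sub>2\<^esup>\<close> shifts the Euler angle \<open>c\<close> by \<open>t\<close>, so \<open>g \<approx> h\<close> holds iff
  \<open>g = h e\<^bsup>k\<pi> p\<^sub>2\<^esup>\<close> for an integer \<open>k\<close>. The linear chart \<open>(\<alpha>, \<beta>) \<mapsto> ((\<alpha> + \<beta>)/\<surd>2, conj (\<alpha> - \<beta>)/\<surd>2)\<close>
  identifies \<open>SU(2)\<close> with \<open>S\<^sup>3\<close> and turns right multiplication by \<open>e\<^bsup>t p\<^sub>2\<^esup>\<close> into the scalar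
  action of \<open>e\<^bsup>i t/2\<^esup>\<close>; for \<open>t = k\<pi>\<close> these scalars are exactly the fourth roots of unity, i.e. the
  identifications defining \<open>L(4,1)\<close>. A homeomorphism carrying one relation to the
  other induces a homeomorphism of the quotient spaces.
\<close>

section \<open>Quotient topologies\<close>

definition quot_class :: "'a topology \<Rightarrow> ('a \<Rightarrow> 'a \<Rightarrow> bool) \<Rightarrow> 'a \<Rightarrow> 'a set" where
  "quot_class X R x = {y \<in> topspace X. R x y}"

lemma istopology_coinduced: "istopology (\<lambda>U. U \<subseteq> A \<and> openin X {x \<in> topspace X. c x \<in> U})"
proof -
  have "{x \<in> topspace X. c x \<in> S \<inter> T} = {x \<in> topspace X. c x \<in> S} \<inter> {x \<in> topspace X. c x \<in> T}"
    and "{x \<in> topspace X. c x \<in> \<Union>K} = (\<Union>S\<in>K. {x \<in> topspace X. c x \<in> S})" for S T K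
    by blast+
  then show ?thesis
    unfolding istopology_def by (auto intro!: openin_Int openin_Union)
qed

lemma openin_quot_top:
  "openin (quot_top X R) U \<longleftrightarrow>
     U \<subseteq> quot_class X R ` topspace X \<and> openin X {x \<in> topspace X. quot_class X R x \<in> U}"
  unfolding quot_top_def quot_class_def[abs_def] by (simp add: istopology_coinduced)

lemma topspace_quot_top: "topspace (quot_top X R) = quot_class X R ` topspace X"
proof -
  have "{x \<in> topspace X. quot_class X R x \<in> quot_class X R ` topspace X} = topspace X"
    by blast
  then have "openin (quot_top X R) (quot_class X R ` topspace X)"
    unfolding openin_quot_top by simp
  then show ?thesis
    using openin_subset openin_quot_top[of X R "topspace (quot_top X R)"] by blast
qed

lemma continuous_map_quot_class: "continuous_map X (quot_top X R) (quot_class X R)"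
  by (auto simp: continuous_map_def topspace_quot_top openin_quot_top)

lemma continuous_map_from_quot_top:
  assumes "continuous_map X Y (h \<circ> quot_class X R)"
  shows "continuous_map (quot_top X R) Y h"
  unfolding continuous_map_def
proof (intro conjI allI impI)
  show "h \<in> topspace (quot_top X R) \<rightarrow> topspace Y"
    using assms by (auto simp: topspace_quot_top continuous_map_def)
next
  fix V assume "openin Y V"
  then have "openin X {x \<in> topspace X. (h \<circ> quot_class X R) x \<in> V}"
    using assms by (simp add: continuous_map_def)
  then show "openin (quot_top X R) {C \<in> topspace (quot_top X R). h C \<in> V}"
    by (auto simp: openin_quot_top topspace_quot_top elim!: back_subst[of "openin X"])
qed

context
  fixes X Y f g R S
  assumes homeo: "homeomorphic_maps X Y f g"
    and rel: "\<And>x y. x \<in> topspace X \<Longrightarrow> y \<in> topspace X \<Longrightarrow> R x y \<longleftrightarrow> S (f x) (f y)"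
begin

lemma image_quot_class:
  assumes "x \<in> topspace X"
  shows "f ` quot_class X R x = quot_class Y S (f x)"
  using homeo assms rel
  unfolding quot_class_def homeomorphic_maps_def continuous_map_def
  by (auto simp: image_iff) (metis Pi_iff)+

lemma continuous_map_image_quot_top:
  "continuous_map (quot_top X R) (quot_top Y S) (image f)"
proof (rule continuous_map_from_quot_top)
  have "continuous_map X (quot_top Y S) (quot_class Y S \<circ> f)"
    using homeo continuous_map_quot_class
    unfolding homeomorphic_maps_def by (blast intro: continuous_map_compose)
  then show "continuous_map X (quot_top Y S) (image f \<circ> quot_class X R)"
    by (rule continuous_map_eq) (simp add: image_quot_class)
qed

end

lemma homeomorphic_space_quot_top:
  assumes homeo: "homeomorphic_maps X Y f g"
    and rel: "\<And>x y. x \<in> topspace X \<Longrightarrow> y \<in> topspace X \<Longrightarrow> R x y \<longleftrightarrow> S (f x) (f y)"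
  shows "quot_top X R homeomorphic_space quot_top Y S"
proof -
  have homeo': "homeomorphic_maps Y X g f"
    using homeo homeomorphic_maps_sym by blast
  have gf: "\<And>x. x \<in> topspace X \<Longrightarrow> g (f x) = x" and fg: "\<And>y. y \<in> topspace Y \<Longrightarrow> f (g y) = y"
    and gY: "\<And>y. y \<in> topspace Y \<Longrightarrow> g y \<in> topspace X"
    using homeo by (auto simp: homeomorphic_maps_def continuous_map_def)
  have rel': "S x y \<longleftrightarrow> R (g x) (g y)" if "x \<in> topspace Y" "y \<in> topspace Y" for x y
    using rel[OF gY gY] fg that by simp
  have "g ` f ` C = C" if "C \<subseteq> topspace X" for C
    using that gf by (force simp: image_image subset_iff)
  moreover have "f ` g ` C = C" if "C \<subseteq> topspace Y" for C
    using that fg by (force simp: image_image subset_iff)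
  ultimately have "homeomorphic_maps (quot_top X R) (quot_top Y S) (image f) (image g)"
    unfolding homeomorphic_maps_def
    using continuous_map_image_quot_top[where R = R and S = S, OF homeo rel]
      continuous_map_image_quot_top[where R = S and S = R, OF homeo' rel']
    by (auto simp: topspace_quot_top quot_class_def)
  then show ?thesis
    unfolding homeomorphic_space_def by blast
qed

lemma mat2_eq_iff: "mat2 a b c d = mat2 a' b' c' d' \<longleftrightarrow> a = a' \<and> b = b' \<and> c = c' \<and> d = d'"
  by (auto simp: vec_eq_iff forall_2 mat2_def)

lemma mat2_mult: "mat2 a b c d ** mat2 e f g h = mat2 (a*e+b*g) (a*f+b*h) (c*e+d*g) (c*f+d*h)"
  by (simp add: vec_eq_iff forall_2 matrix_matrix_mult_def sum_2 mat2_def)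

lemma mat2_scaleR: "r *\<^sub>R mat2 a b c d = mat2 (r *\<^sub>R a) (r *\<^sub>R b) (r *\<^sub>R c) (r *\<^sub>R d)"
  by (simp add: vec_eq_iff forall_2 mat2_def)

lemma mat2_add: "mat2 a b c d + mat2 e f g h = mat2 (a+e) (b+f) (c+g) (d+h)"
  by (simp add: vec_eq_iff forall_2 mat2_def)

lemma mat2_uminus: "- mat2 a b c d = mat2 (-a) (-b) (-c) (-d)"
  by (simp add: vec_eq_iff forall_2 mat2_def)

lemma mat_1_eq_mat2: "mat 1 = mat2 1 0 0 1"
  by (simp add: vec_eq_iff forall_2 mat2_def mat_def)

lemma continuous_on_mat2:
  assumes "continuous_on S f1" "continuous_on S f2" "continuous_on S f3" "continuous_on S f4"
  shows "continuous_on S (\<lambda>x. mat2 (f1 x) (f2 x) (f3 x) (f4 x))"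
proof -
  have eq: "(\<lambda>x. mat2 (f1 x) (f2 x) (f3 x) (f4 x)) =
      (\<lambda>x. \<chi> i j. if i = 1 then if j = 1 then f1 x else f2 x else if j = 1 then f3 x else f4 x)"
    by (simp add: fun_eq_iff vec_eq_iff forall_2 mat2_def)
  have entries: "continuous_on S
      (\<lambda>x. if i = 1 then if j = 1 then f1 x else f2 x else if j = 1 then f3 x else f4 x)" for i j :: 2
    using assms by (cases "i = 1"; cases "j = 1") simp_all
  show ?thesis
    unfolding eq by (intro continuous_on_vec_lambda) (rule entries)
qed

lemma matrix_mul_scaleR_right:
  fixes A :: "'a::real_algebra_1^'n^'m" and B :: "'a^'k^'n"
  shows "A ** (r *\<^sub>R B) = r *\<^sub>R (A ** B)"
  by (simp add: vec_eq_iff matrix_matrix_mult_def scaleR_sum_right)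

lemma matrix_mul_scaleR_left:
  fixes A :: "'a::real_algebra_1^'n^'m" and B :: "'a^'k^'n"
  shows "(r *\<^sub>R A) ** B = r *\<^sub>R (A ** B)"
  by (simp add: vec_eq_iff matrix_matrix_mult_def scaleR_sum_right)

section \<open>Exponentials of the Lie algebra basis\<close>

lemma mpow_scaleR: "mpow (s *\<^sub>R Q) n = (s ^ n) *\<^sub>R mpow Q n"
  by (induction n) (simp_all add: matrix_mul_scaleR_right matrix_mul_scaleR_left)

lemma mpow_square_minus_one:
  assumes Q: "Q ** Q = - mat 1"
  shows "mpow Q n = (if even n then ((-1) ^ (n div 2)) *\<^sub>R mat 1 else ((-1::real) ^ (n div 2)) *\<^sub>R Q)"
proof (induction n)
  case 0
  then show ?case by simp
next
  case (Suc n)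
  show ?case
  proof (cases "even n")
    case True
    then show ?thesis using Suc by (simp add: matrix_mul_scaleR_right)
  next
    case False
    then have "Suc n div 2 = Suc (n div 2)" by presburger
    then show ?thesis using Suc False by (simp add: matrix_mul_scaleR_right Q)
  qed
qed

lemma mexp_scaleR_square_minus_one:
  assumes Q: "Q ** Q = - mat 1"
  shows "mexp (s *\<^sub>R Q) = cos s *\<^sub>R mat 1 + sin s *\<^sub>R Q"
proof -
  have series_eq: "(1 / fact n) *\<^sub>R mpow (s *\<^sub>R Q) n =
      (cos_coeff n * s ^ n) *\<^sub>R mat 1 + (sin_coeff n * s ^ n) *\<^sub>R Q" for n
  proof (cases "even n")
    case True
    then show ?thesis
      by (simp add: mpow_scaleR mpow_square_minus_one[OF Q] cos_coeff_def sin_coeff_def)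
  next
    case False
    then have "(n - Suc 0) div 2 = n div 2" by presburger
    then show ?thesis using False
      by (simp add: mpow_scaleR mpow_square_minus_one[OF Q] cos_coeff_def sin_coeff_def)
  qed
  have "(\<lambda>n. (cos_coeff n * s ^ n) *\<^sub>R mat 1 + (sin_coeff n * s ^ n) *\<^sub>R Q) sums
        (cos s *\<^sub>R mat 1 + sin s *\<^sub>R Q)"
    using cos_converges[of s] sin_converges[of s] by (intro sums_add sums_scaleR_left) simp_all
  then show ?thesis
    unfolding mexp_def series_eq[symmetric] by (rule sums_unique[symmetric])
qed

definition exp_p1 :: "real \<Rightarrow> cmat2" where
  "exp_p1 t = mat2 (cos (t/2)) (sin (t/2)) (- sin (t/2)) (cos (t/2))"

definition exp_p2 :: "real \<Rightarrow> cmat2" where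
  "exp_p2 t = mat2 (cos (t/2)) (\<i> * sin (t/2)) (\<i> * sin (t/2)) (cos (t/2))"

lemma mexp_scaleR_p1: "mexp (t *\<^sub>R p1) = exp_p1 t"
proof -
  have "t *\<^sub>R p1 = (t/2) *\<^sub>R mat2 0 1 (-1) 0"
    unfolding p1_def mat2_scaleR by (simp add: scaleR_conv_of_real)
  moreover have "mat2 0 1 (-1) 0 ** mat2 0 1 (-1) 0 = - mat 1"
    by (simp add: mat2_mult mat_1_eq_mat2 mat2_uminus)
  ultimately have "mexp (t *\<^sub>R p1) = cos (t/2) *\<^sub>R mat 1 + sin (t/2) *\<^sub>R mat2 0 1 (-1) 0"
    by (simp add: mexp_scaleR_square_minus_one)
  also have "\<dots> = exp_p1 t"
    unfolding mat_1_eq_mat2 mat2_scaleR mat2_add exp_p1_def by (simp add: scaleR_conv_of_real)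
  finally show ?thesis .
qed

lemma mexp_scaleR_p2: "mexp (t *\<^sub>R p2) = exp_p2 t"
proof -
  have "t *\<^sub>R p2 = (t/2) *\<^sub>R mat2 0 \<i> \<i> 0"
    unfolding p2_def mat2_scaleR by (simp add: scaleR_conv_of_real)
  moreover have "mat2 0 \<i> \<i> 0 ** mat2 0 \<i> \<i> 0 = - mat 1"
    by (simp add: mat2_mult mat_1_eq_mat2 mat2_uminus)
  ultimately have "mexp (t *\<^sub>R p2) = cos (t/2) *\<^sub>R mat 1 + sin (t/2) *\<^sub>R mat2 0 \<i> \<i> 0"
    by (simp add: mexp_scaleR_square_minus_one)
  also have "\<dots> = exp_p2 t"
    unfolding mat_1_eq_mat2 mat2_scaleR mat2_add exp_p2_def
    by (simp add: scaleR_conv_of_real mult.commute)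
  finally show ?thesis .
qed

lemma exp_p2_add: "exp_p2 s ** exp_p2 t = exp_p2 (s + t)"
  unfolding exp_p2_def mat2_mult mat2_eq_iff
  by (simp add: complex_eq_iff add_divide_distrib cos_add sin_add algebra_simps)

section \<open>Euler angles\<close>

definition su2_mat :: "complex \<Rightarrow> complex \<Rightarrow> cmat2" where
  "su2_mat \<alpha> \<beta> = mat2 \<alpha> \<beta> (- cnj \<beta>) (cnj \<alpha>)"

lemma SU2_iff: "g \<in> SU2 \<longleftrightarrow> (\<exists>\<alpha> \<beta>. g = su2_mat \<alpha> \<beta> \<and> (cmod \<alpha>)\<^sup>2 + (cmod \<beta>)\<^sup>2 = 1)"
  by (auto simp: SU2_def su2_mat_def)

lemma euler_eq_su2_mat:
  "euler a b c = su2_mat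
     (Complex (cos (a/2) * cos ((b-c)/2)) (sin (a/2) * sin ((b+c)/2)))
     (Complex (sin (a/2) * cos ((b+c)/2)) (- cos (a/2) * sin ((b-c)/2)))"
  unfolding euler_def mexp_scaleR_p1 mexp_scaleR_p2 exp_p1_def exp_p2_def su2_mat_def
    mat2_mult mat2_eq_iff
  by (simp add: complex_eq_iff diff_divide_distrib add_divide_distrib cos_add sin_add cos_diff
      sin_diff algebra_simps)

lemma euler_add_c: "euler a b (c + t) = euler a b c ** exp_p2 t"
  unfolding euler_def mexp_scaleR_p2 by (simp add: exp_p2_add[symmetric] matrix_mul_assoc)

lemma S3_polar_coordinates:
  assumes "(cmod x)\<^sup>2 + (cmod y)\<^sup>2 = 1"
  obtains h u v where "0 \<le> h" "h \<le> pi/2" "x = rcis (cos h) u" "y = rcis (sin h) v"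
proof -
  obtain h where "0 \<le> h" "h \<le> pi/2" "cmod x = cos h" "cmod y = sin h"
    using sincos_total_pi_half[OF norm_ge_zero norm_ge_zero assms] by blast
  then show ?thesis
    using that[of h "Arg x" "Arg y"] rcis_cmod_Arg[of x] rcis_cmod_Arg[of y] by simp
qed

text \<open>The Euler angles are the polar coordinates of the point \<open>(Re \<alpha> - i Im \<beta>, Re \<beta> + i Im \<alpha>)\<close>
  of \<open>S\<^sup>3\<close>: \<open>a/2\<close> is its latitude and \<open>(b - c)/2\<close>, \<open>(b + c)/2\<close> are its two phases.\<close>
lemma euler_angles_exist:
  assumes "g \<in> SU2"
  obtains a b c where "a \<in> {0..pi}" "b \<in> {0..<2*pi}" "g = euler a b c"
proof -
  obtain \<alpha> \<beta> where g: "g = su2_mat \<alpha> \<beta>" and n: "(cmod \<alpha>)\<^sup>2 + (cmod \<beta>)\<^sup>2 = 1"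
    using assms SU2_iff by blast
  have "(cmod (Complex (Re \<alpha>) (- Im \<beta>)))\<^sup>2 + (cmod (Complex (Re \<beta>) (Im \<alpha>)))\<^sup>2 = 1"
    using n by (simp add: cmod_power2)
  then obtain h u v where h: "0 \<le> h" "h \<le> pi/2"
    and uv: "Complex (Re \<alpha>) (- Im \<beta>) = rcis (cos h) u" "Complex (Re \<beta>) (Im \<alpha>) = rcis (sin h) v"
    by (rule S3_polar_coordinates)
  define k where "k = \<lfloor>(u + v) / (2*pi)\<rfloor>"
  have k: "of_int k * (2*pi) \<le> u + v" "u + v < (of_int k + 1) * (2*pi)"
    unfolding k_def by (simp_all add: floor_divide_lower floor_divide_upper)
  define b where "b = u + v - 2*pi * of_int k"
  define c where "c = v - u + 2*pi * of_int k"
  have bc: "(b - c)/2 = u - 2*pi * of_int k" "(b + c)/2 = v"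
    by (simp_all add: b_def c_def field_simps)
  have "cos ((b - c)/2) = cos u" "sin ((b - c)/2) = sin u"
    unfolding bc by (simp_all add: cos_diff sin_diff)
  with bc(2) have "euler (2*h) b c = g"
    using uv by (simp add: euler_eq_su2_mat g su2_mat_def mat2_eq_iff complex_eq_iff)
  moreover have "2*h \<in> {0..pi}" "b \<in> {0..<2*pi}"
    using h k by (simp_all add: b_def algebra_simps)
  ultimately show ?thesis using that by blast
qed

lemma cmod_rotation_sum:
  "(cmod (\<alpha> * of_real C + \<beta> * (\<i> * of_real S)))\<^sup>2
     + (cmod (\<alpha> * (\<i> * of_real S) + \<beta> * of_real C))\<^sup>2
   = ((cmod \<alpha>)\<^sup>2 + (cmod \<beta>)\<^sup>2) * (C\<^sup>2 + S\<^sup>2)"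
  unfolding cmod_power2 by (simp add: power2_eq_square algebra_simps)

lemma SU2_mult_exp_p2:
  assumes "g \<in> SU2"
  shows "g ** exp_p2 t \<in> SU2"
proof -
  obtain \<alpha> \<beta> where g: "g = su2_mat \<alpha> \<beta>" and n: "(cmod \<alpha>)\<^sup>2 + (cmod \<beta>)\<^sup>2 = 1"
    using assms SU2_iff by blast
  define C S where "C = cos (t/2)" and "S = sin (t/2)"
  have "g ** exp_p2 t = su2_mat (\<alpha> * of_real C + \<beta> * (\<i> * of_real S)) (\<alpha> * (\<i> * of_real S) + \<beta> * of_real C)"
    by (simp add: g su2_mat_def exp_p2_def mat2_mult mat2_eq_iff C_def S_def algebra_simps)
  moreover have "(cmod (\<alpha> * of_real C + \<beta> * (\<i> * of_real S)))\<^sup>2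
      + (cmod (\<alpha> * (\<i> * of_real S) + \<beta> * of_real C))\<^sup>2 = 1"
    unfolding cmod_rotation_sum n by (simp add: C_def S_def)
  ultimately show ?thesis
    using SU2_iff by blast
qed

lemma approx_rel_iff_mult_exp_p2:
  assumes "h \<in> SU2"
  shows "approx_rel g h \<longleftrightarrow> (\<exists>k::int. g = h ** exp_p2 (of_int k * pi))"
proof
  assume "approx_rel g h"
  then obtain a b c1 c2 k where "g = euler a b c1" "h = euler a b c2" "c1 = c2 + of_int k * pi"
    unfolding approx_rel_def by (metis diff_add_cancel add.commute)
  then show "\<exists>k::int. g = h ** exp_p2 (of_int k * pi)"
    using euler_add_c by blast
next
  assume "\<exists>k::int. g = h ** exp_p2 (of_int k * pi)"
  then obtain k :: int where k: "g = h ** exp_p2 (of_int k * pi)" ..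
  obtain a b c where "a \<in> {0..pi}" "b \<in> {0..<2*pi}" "h = euler a b c"
    using euler_angles_exist[OF assms] .
  moreover have "g = euler a b (c + of_int k * pi)"
    using k euler_add_c \<open>h = euler a b c\<close> by simp
  ultimately show "approx_rel g h"
    unfolding approx_rel_def by fastforce
qed

section \<open>The sphere chart and the lens space relation\<close>

text \<open>Right multiplication by \<open>exp_p2 t\<close> multiplies \<open>\<alpha> + \<beta>\<close> by \<open>e\<^bsup>i t/2\<^esup>\<close> and \<open>\<alpha> - \<beta>\<close> by
  \<open>e\<^bsup>-i t/2\<^esup>\<close>; the conjugate in the second coordinate makes both factors equal.\<close>
definition su2_to_S3 :: "cmat2 \<Rightarrow> complex \<times> complex" where
  "su2_to_S3 M = ((M$1$1 + M$1$2) / sqrt 2, cnj (M$1$1 - M$1$2) / sqrt 2)"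

definition S3_to_su2 :: "complex \<times> complex \<Rightarrow> cmat2" where
  "S3_to_su2 x = su2_mat ((fst x + cnj (snd x)) / sqrt 2) ((fst x - cnj (snd x)) / sqrt 2)"

lemma su2_to_S3_su2_mat: "su2_to_S3 (su2_mat \<alpha> \<beta>) = ((\<alpha> + \<beta>) / sqrt 2, cnj (\<alpha> - \<beta>) / sqrt 2)"
  by (simp add: su2_to_S3_def su2_mat_def mat2_def)

lemma su2_to_S3_mult_exp_p2:
  "su2_to_S3 (M ** exp_p2 t) = (cis (t/2) * fst (su2_to_S3 M), cis (t/2) * snd (su2_to_S3 M))"
  by (simp add: su2_to_S3_def matrix_matrix_mult_def sum_2 exp_p2_def mat2_def cis.ctr
      complex_eq_iff algebra_simps)

lemma su2_to_S3_in_S3: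
  assumes "g \<in> SU2"
  shows "su2_to_S3 g \<in> S3"
proof -
  obtain \<alpha> \<beta> where "g = su2_mat \<alpha> \<beta>" "(cmod \<alpha>)\<^sup>2 + (cmod \<beta>)\<^sup>2 = 1"
    using assms SU2_iff by blast
  moreover have "(cmod ((\<alpha> + \<beta>) / sqrt 2))\<^sup>2 + (cmod (cnj (\<alpha> - \<beta>) / sqrt 2))\<^sup>2
      = (cmod \<alpha>)\<^sup>2 + (cmod \<beta>)\<^sup>2"
    unfolding cmod_power2 by (simp add: power2_eq_square field_simps)
  ultimately show ?thesis
    by (simp add: S3_def su2_to_S3_su2_mat)
qed

lemma S3_to_su2_in_SU2:
  assumes "x \<in> S3"
  shows "S3_to_su2 x \<in> SU2"
proof -
  obtain x1 x2 where x: "x = (x1, x2)" and n: "(cmod x1)\<^sup>2 + (cmod x2)\<^sup>2 = 1"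
    using assms by (auto simp: S3_def)
  have "(cmod ((x1 + cnj x2) / sqrt 2))\<^sup>2 + (cmod ((x1 - cnj x2) / sqrt 2))\<^sup>2 = 1"
    unfolding n[symmetric] cmod_power2 by (simp add: power2_eq_square field_simps)
  then show ?thesis
    unfolding SU2_iff S3_to_su2_def x fst_conv snd_conv by blast
qed

lemma of_real_sqrt2_mult_self: "complex_of_real (sqrt 2) * complex_of_real (sqrt 2) = 2"
  by (simp flip: of_real_mult)

lemma su2_to_S3_inverse: "S3_to_su2 (su2_to_S3 (su2_mat \<alpha> \<beta>)) = su2_mat \<alpha> \<beta>"
  unfolding su2_to_S3_su2_mat S3_to_su2_def fst_conv snd_conv
  by (simp add: su2_mat_def mat2_eq_iff field_simps of_real_sqrt2_mult_self)

lemma S3_to_su2_inverse: "su2_to_S3 (S3_to_su2 x) = x"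
  by (simp add: S3_to_su2_def su2_to_S3_su2_mat field_simps prod_eq_iff of_real_sqrt2_mult_self)

lemma homeomorphic_maps_su2_to_S3:
  "homeomorphic_maps (top_of_set SU2) (top_of_set S3) su2_to_S3 S3_to_su2"
proof -
  have "continuous_on SU2 su2_to_S3" "continuous_on S3 S3_to_su2"
    unfolding su2_to_S3_def S3_to_su2_def su2_mat_def
    by (intro continuous_on_mat2 continuous_intros; simp)+
  then show ?thesis
    using su2_to_S3_in_S3 S3_to_su2_in_SU2 S3_to_su2_inverse su2_to_S3_inverse
    by (auto simp: homeomorphic_maps_def SU2_iff)
qed

lemma fourth_roots_unity: "(w::complex) ^ 4 = 1 \<longleftrightarrow> (\<exists>k::int. w = cis (of_int k * pi / 2))"
proof
  assume "w ^ 4 = 1"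
  then have "w \<in> (\<lambda>k. cis (2 * pi * real k / real 4)) ` {..<4}"
    using bij_betw_imp_surj_on[OF Complex.bij_betw_roots_unity[of 4, OF zero_less_numeral]] by blast
  then obtain k :: nat where "w = cis (2 * pi * real k / real 4)" by blast
  then have "w = cis (of_int (int k) * pi / 2)" by (simp add: mult.commute)
  then show "\<exists>k::int. w = cis (of_int k * pi / 2)" ..
next
  assume "\<exists>k::int. w = cis (of_int k * pi / 2)"
  then obtain k :: int where w: "w = cis (of_int k * pi / 2)" ..
  have "w ^ 4 = cis (2 * pi * of_int k)"
    unfolding w Complex.DeMoivre by (simp add: field_simps)
  then show "w ^ 4 = 1" by simp
qed

lemma approx_rel_iff_lens_rel:
  assumes "g \<in> SU2" "h \<in> SU2"
  shows "approx_rel g h \<longleftrightarrow> lens_rel 4 1 (su2_to_S3 g) (su2_to_S3 h)"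
proof -
  have "inj_on su2_to_S3 SU2"
    by (rule inj_on_inverseI[where g = S3_to_su2]) (auto simp: SU2_iff su2_to_S3_inverse)
  then have "approx_rel g h \<longleftrightarrow> (\<exists>k::int. su2_to_S3 g = su2_to_S3 (h ** exp_p2 (of_int k * pi)))"
    using assms approx_rel_iff_mult_exp_p2 SU2_mult_exp_p2 by (auto dest: inj_onD)
  also have "\<dots> \<longleftrightarrow> (\<exists>w. w ^ 4 = 1 \<and> su2_to_S3 g = (w * fst (su2_to_S3 h), w * snd (su2_to_S3 h)))"
    unfolding su2_to_S3_mult_exp_p2 fourth_roots_unity by (auto simp: mult.commute)
  also have "\<dots> \<longleftrightarrow> lens_rel 4 1 (su2_to_S3 g) (su2_to_S3 h)"
    by (auto simp: lens_rel_def prod_eq_iff)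
  finally show ?thesis .
qed

theorem proposition2:
  shows "quot_top (subtopology euclidean SU2) approx_rel homeomorphic_space lens_space 4 1"
  unfolding lens_space_def
  by (rule homeomorphic_space_quot_top[OF homeomorphic_maps_su2_to_S3])
    (simp add: approx_rel_iff_lens_rel)

end
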